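(* Let $\mathcal{R}$ be a non-closed linear manifold in a Hilbert space $\mathcal{H}$. Then the following are equivalent: (i) there exists an orthogonal projection $P$ in $\mathcal{H}$ such that $\operatorname{ran} P\cap\mathcal{R}=\{0\}$ and $\operatorname{ran}(I-P)\cap\mathcal{R}=\{0\}$; (ii) there exists a fundamental symmetry $J$ in $\mathcal{H}$ such that $J\mathcal{R}\cap\mathcal{R}=\{0\}$.
   Context: $\mathcal{H}$ is a complex, infinite-dimensional, separable Hilbert space. A linear manifold is a (not necessarily closed) linear subset. A fundamental symmetry is a bounded operator $J$ on $\mathcal{H}$ with $J=J^*=J^{-1}$ (equivalently $J=2P-I$ for an orthogonal projection $P$). *)

theory Defs
  imports "HOL-Analysis.Analysis"
begin

text \<open>The complex, infinite-dimensional, separable Hilbert space is modelled concretely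
as l2(N) of square-summable complex sequences (every such space is unitarily
isomorphic to it).\<close>

type_synonym vec = "nat \<Rightarrow> complex"

definition l2 :: "vec set" where
  "l2 = {x. summable (\<lambda>n. (cmod (x n))\<^sup>2)}"

definition l2_inner :: "vec \<Rightarrow> vec \<Rightarrow> complex" where
  "l2_inner x y = (\<Sum>n. cnj (x n) * y n)"

definition l2_norm :: "vec \<Rightarrow> real" where
  "l2_norm x = sqrt (\<Sum>n. (cmod (x n))\<^sup>2)"

definition vzero :: vec where "vzero = (\<lambda>n. 0)"
definition vadd :: "vec \<Rightarrow> vec \<Rightarrow> vec" where "vadd x y = (\<lambda>n. x n + y n)"
definition vsub :: "vec \<Rightarrow> vec \<Rightarrow> vec" where "vsub x y = (\<lambda>n. x n - y n)"
definition vscale :: "complex \<Rightarrow> vec \<Rightarrow> vec" where "vscale c x = (\<lambda>n. c * x n)"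

definition linear_manifold :: "vec set \<Rightarrow> bool" where
  "linear_manifold R \<longleftrightarrow> R \<subseteq> l2 \<and> vzero \<in> R \<and>
     (\<forall>x\<in>R. \<forall>y\<in>R. vadd x y \<in> R) \<and> (\<forall>c. \<forall>x\<in>R. vscale c x \<in> R)"

definition l2_closed :: "vec set \<Rightarrow> bool" where
  "l2_closed R \<longleftrightarrow> (\<forall>s y. (\<forall>k. s k \<in> R) \<longrightarrow> y \<in> l2 \<longrightarrow>
      (\<lambda>k. l2_norm (vsub (s k) y)) \<longlonglongrightarrow> 0 \<longrightarrow> y \<in> R)"

text \<open>Bounded (everywhere defined) linear operator on l2; only its values on l2 matter.\<close>
definition bounded_op :: "(vec \<Rightarrow> vec) \<Rightarrow> bool" where
  "bounded_op T \<longleftrightarrow> (\<forall>x\<in>l2. T x \<in> l2) \<and>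
     (\<forall>x\<in>l2. \<forall>y\<in>l2. T (vadd x y) = vadd (T x) (T y)) \<and>
     (\<forall>c. \<forall>x\<in>l2. T (vscale c x) = vscale c (T x)) \<and>
     (\<exists>C. \<forall>x\<in>l2. l2_norm (T x) \<le> C * l2_norm x)"

definition selfadjoint_op :: "(vec \<Rightarrow> vec) \<Rightarrow> bool" where
  "selfadjoint_op T \<longleftrightarrow> (\<forall>x\<in>l2. \<forall>y\<in>l2. l2_inner (T x) y = l2_inner x (T y))"

definition orth_proj :: "(vec \<Rightarrow> vec) \<Rightarrow> bool" where
  "orth_proj P \<longleftrightarrow> bounded_op P \<and> selfadjoint_op P \<and> (\<forall>x\<in>l2. P (P x) = P x)"

definition fund_sym :: "(vec \<Rightarrow> vec) \<Rightarrow> bool" where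
  "fund_sym J \<longleftrightarrow> bounded_op J \<and> selfadjoint_op J \<and> (\<forall>x\<in>l2. J (J x) = x)"

end

theory Submission
  imports Defs
begin

text \<open>Fundamental symmetries and orthogonal projections correspond via \<open>J = 2P - I\<close>, and under
this correspondence \<open>ran P\<close> and \<open>ran (I - P)\<close> are the eigenspaces of \<open>J\<close> for \<open>1\<close> and \<open>-1\<close>.
So it suffices to show that \<open>J R \<inter> R = {0}\<close> iff \<open>R\<close> meets neither eigenspace nontrivially.
If \<open>x\<close> and \<open>J x\<close> both lie in \<open>R\<close>, then \<open>x + J x \<in> R\<close> is fixed by \<open>J\<close>, hence zero; so
\<open>J x = -x\<close>, and \<open>x\<close> lies in \<open>R\<close> and in the \<open>-1\<close> eigenspace, hence is zero.\<close>

lemma l2_vzero: "vzero \<in> l2"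
  unfolding l2_def vzero_def by simp

lemma cmod_add_sq_le:
  fixes u v :: complex
  shows "(cmod (u + v))\<^sup>2 \<le> 2 * (cmod u)\<^sup>2 + 2 * (cmod v)\<^sup>2"
proof -
  have "(cmod (u + v))\<^sup>2 \<le> (cmod u + cmod v)\<^sup>2"
    by (simp add: power_mono norm_triangle_ineq)
  also have "\<dots> \<le> 2 * (cmod u)\<^sup>2 + 2 * (cmod v)\<^sup>2"
    using sum_squares_bound[of "cmod u" "cmod v"] by (simp add: power2_sum)
  finally show ?thesis .
qed

lemma l2_vadd: "x \<in> l2 \<Longrightarrow> y \<in> l2 \<Longrightarrow> vadd x y \<in> l2"
  unfolding l2_def vadd_def mem_Collect_eq
  by (rule summable_comparison_test[of _ "\<lambda>n. 2 * (cmod (x n))\<^sup>2 + 2 * (cmod (y n))\<^sup>2"])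
    (auto intro: cmod_add_sq_le summable_add summable_mult)

lemma l2_vscale: "x \<in> l2 \<Longrightarrow> vscale c x \<in> l2"
  unfolding l2_def vscale_def by (simp add: norm_mult power_mult_distrib summable_mult)

lemma l2_vsub:
  assumes "x \<in> l2" "y \<in> l2"
  shows "vsub x y \<in> l2"
proof -
  have "vsub x y = vadd x (vscale (-1) y)"
    by (simp add: vsub_def vadd_def vscale_def)
  then show ?thesis
    using assms by (simp add: l2_vadd l2_vscale)
qed

lemma l2_norm_sq: "x \<in> l2 \<Longrightarrow> (l2_norm x)\<^sup>2 = (\<Sum>n. (cmod (x n))\<^sup>2)"
  unfolding l2_def l2_norm_def by (simp add: suminf_nonneg)

lemma l2_norm_nonneg: "x \<in> l2 \<Longrightarrow> 0 \<le> l2_norm x"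
  unfolding l2_def l2_norm_def by (simp add: suminf_nonneg)

lemma l2_norm_vadd_sq_le:
  assumes "x \<in> l2" "y \<in> l2"
  shows "(l2_norm (vadd x y))\<^sup>2 \<le> 2 * (l2_norm x)\<^sup>2 + 2 * (l2_norm y)\<^sup>2"
proof -
  have sx: "summable (\<lambda>n. (cmod (x n))\<^sup>2)" and sy: "summable (\<lambda>n. (cmod (y n))\<^sup>2)"
    and sxy: "summable (\<lambda>n. (cmod (x n + y n))\<^sup>2)"
    using assms l2_vadd[OF assms] unfolding l2_def vadd_def by auto
  have "(l2_norm (vadd x y))\<^sup>2 = (\<Sum>n. (cmod (x n + y n))\<^sup>2)"
    using l2_norm_sq[OF l2_vadd[OF assms]] by (simp add: vadd_def)
  also have "\<dots> \<le> (\<Sum>n. 2 * (cmod (x n))\<^sup>2 + 2 * (cmod (y n))\<^sup>2)"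
    using sx sy sxy by (intro suminf_le) (auto intro: cmod_add_sq_le summable_add summable_mult)
  also have "\<dots> = 2 * (l2_norm x)\<^sup>2 + 2 * (l2_norm y)\<^sup>2"
    using sx sy assms by (simp add: l2_norm_sq suminf_add[symmetric] suminf_mult summable_mult)
  finally show ?thesis .
qed

lemma l2_norm_vscale_sq:
  "x \<in> l2 \<Longrightarrow> (l2_norm (vscale c x))\<^sup>2 = (cmod c)\<^sup>2 * (l2_norm x)\<^sup>2"
  using l2_norm_sq[OF l2_vscale] l2_norm_sq
  by (simp add: l2_def vscale_def norm_mult power_mult_distrib suminf_mult)

lemma l2_inner_summable:
  assumes "x \<in> l2" "y \<in> l2"
  shows "summable (\<lambda>n. cnj (x n) * y n)"
proof (rule summable_comparison_test)
  show "summable (\<lambda>n. (cmod (x n))\<^sup>2 + (cmod (y n))\<^sup>2)"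
    using assms unfolding l2_def by (auto intro: summable_add)
  have "cmod (x n) * cmod (y n) \<le> (cmod (x n))\<^sup>2 + (cmod (y n))\<^sup>2" for n
    using sum_squares_bound[of "cmod (x n)" "cmod (y n)"]
      mult_nonneg_nonneg[OF norm_ge_zero norm_ge_zero, of "x n" "y n"] by linarith
  then show "\<exists>N. \<forall>n\<ge>N. norm (cnj (x n) * y n) \<le> (cmod (x n))\<^sup>2 + (cmod (y n))\<^sup>2"
    by (simp add: norm_mult)
qed

lemma l2_inner_vadd_left:
  "a \<in> l2 \<Longrightarrow> b \<in> l2 \<Longrightarrow> y \<in> l2 \<Longrightarrow> l2_inner (vadd a b) y = l2_inner a y + l2_inner b y"
  unfolding l2_inner_def vadd_def
  by (simp add: distrib_right suminf_add[OF l2_inner_summable l2_inner_summable])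

lemma l2_inner_vadd_right:
  "a \<in> l2 \<Longrightarrow> b \<in> l2 \<Longrightarrow> y \<in> l2 \<Longrightarrow> l2_inner y (vadd a b) = l2_inner y a + l2_inner y b"
  unfolding l2_inner_def vadd_def
  by (simp add: distrib_left suminf_add[OF l2_inner_summable l2_inner_summable])

lemma l2_inner_vscale_left:
  "a \<in> l2 \<Longrightarrow> y \<in> l2 \<Longrightarrow> l2_inner (vscale c a) y = cnj c * l2_inner a y"
  unfolding l2_inner_def vscale_def
  by (simp add: mult.assoc suminf_mult[OF l2_inner_summable])

lemma l2_inner_vscale_right:
  "a \<in> l2 \<Longrightarrow> y \<in> l2 \<Longrightarrow> l2_inner y (vscale c a) = c * l2_inner y a"
  unfolding l2_inner_def vscale_def
  by (simp add: mult.left_commute suminf_mult[OF l2_inner_summable])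

lemma bounded_op_l2: "bounded_op T \<Longrightarrow> x \<in> l2 \<Longrightarrow> T x \<in> l2"
  and bounded_op_vadd: "bounded_op T \<Longrightarrow> x \<in> l2 \<Longrightarrow> y \<in> l2 \<Longrightarrow> T (vadd x y) = vadd (T x) (T y)"
  and bounded_op_vscale: "bounded_op T \<Longrightarrow> x \<in> l2 \<Longrightarrow> T (vscale c x) = vscale c (T x)"
  unfolding bounded_op_def by blast+

lemma bounded_op_vzero: "bounded_op T \<Longrightarrow> T vzero = vzero"
  using bounded_op_vscale[OF _ l2_vzero, of T 0] by (simp add: vscale_def vzero_def)

lemma bounded_op_vsub:
  assumes "bounded_op T" "x \<in> l2" "y \<in> l2"
  shows "T (vsub x y) = vsub (T x) (T y)"
proof -
  have "vsub x y = vadd x (vscale (-1) y)"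
    by (simp add: vsub_def vadd_def vscale_def)
  then have "T (vsub x y) = vadd (T x) (vscale (-1) (T y))"
    using assms l2_vscale by (simp add: bounded_op_vadd bounded_op_vscale)
  then show ?thesis
    by (simp add: vsub_def vadd_def vscale_def)
qed

definition id_lincomb :: "complex \<Rightarrow> complex \<Rightarrow> (vec \<Rightarrow> vec) \<Rightarrow> vec \<Rightarrow> vec" where
  "id_lincomb a b S x = vadd (vscale a x) (vscale b (S x))"

lemma bounded_op_id_lincomb:
  assumes S: "bounded_op S"
  shows "bounded_op (id_lincomb a b S)"
proof -
  have SL: "S x \<in> l2" if "x \<in> l2" for x
    using S that by (rule bounded_op_l2)
  obtain C where C: "\<And>x. x \<in> l2 \<Longrightarrow> l2_norm (S x) \<le> C * l2_norm x"
    using S unfolding bounded_op_def by blast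
  define K where "K = 2 * (cmod a)\<^sup>2 + 2 * (cmod b)\<^sup>2 * C\<^sup>2"
  have "l2_norm (id_lincomb a b S x) \<le> sqrt K * l2_norm x" if x: "x \<in> l2" for x
  proof -
    have SC: "(l2_norm (S x))\<^sup>2 \<le> C\<^sup>2 * (l2_norm x)\<^sup>2"
      using power_mono[OF C[OF x] l2_norm_nonneg[OF SL[OF x]], of 2] by (simp add: power_mult_distrib)
    have "(l2_norm (id_lincomb a b S x))\<^sup>2
        \<le> 2 * (cmod a)\<^sup>2 * (l2_norm x)\<^sup>2 + 2 * (cmod b)\<^sup>2 * (l2_norm (S x))\<^sup>2"
      using l2_norm_vadd_sq_le[OF l2_vscale l2_vscale, OF x SL[OF x], of a b]
      by (simp add: id_lincomb_def l2_norm_vscale_sq x SL)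
    also have "\<dots> \<le> 2 * (cmod a)\<^sup>2 * (l2_norm x)\<^sup>2 + 2 * (cmod b)\<^sup>2 * (C\<^sup>2 * (l2_norm x)\<^sup>2)"
      using SC by (intro add_left_mono mult_left_mono) simp_all
    also have "\<dots> = K * (l2_norm x)\<^sup>2"
      by (simp add: K_def algebra_simps)
    finally have "(l2_norm (id_lincomb a b S x))\<^sup>2 \<le> K * (l2_norm x)\<^sup>2" .
    then have "l2_norm (id_lincomb a b S x) \<le> sqrt (K * (l2_norm x)\<^sup>2)"
      by (metis real_le_rsqrt)
    then show ?thesis
      by (simp add: real_sqrt_mult l2_norm_nonneg x)
  qed
  moreover have "id_lincomb a b S x \<in> l2" if "x \<in> l2" for x
    using that SL by (simp add: id_lincomb_def l2_vadd l2_vscale)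
  moreover have "id_lincomb a b S (vadd x y) = vadd (id_lincomb a b S x) (id_lincomb a b S y)"
    if "x \<in> l2" "y \<in> l2" for x y
    using bounded_op_vadd[OF S that]
    by (simp add: id_lincomb_def vadd_def vscale_def algebra_simps)
  moreover have "id_lincomb a b S (vscale c x) = vscale c (id_lincomb a b S x)"
    if "x \<in> l2" for c x
    using bounded_op_vscale[OF S that]
    by (simp add: id_lincomb_def vadd_def vscale_def algebra_simps)
  ultimately show ?thesis
    unfolding bounded_op_def by blast
qed

lemma selfadjoint_op_id_lincomb:
  assumes "bounded_op S" "selfadjoint_op S" "a \<in> \<real>" "b \<in> \<real>"
  shows "selfadjoint_op (id_lincomb a b S)"
  unfolding selfadjoint_op_def
proof (intro ballI)
  fix x y assume x: "x \<in> l2" and y: "y \<in> l2"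
  have Sx: "S x \<in> l2" and Sy: "S y \<in> l2"
    using assms(1) x y by (auto intro: bounded_op_l2)
  have "l2_inner (id_lincomb a b S x) y = a * l2_inner x y + b * l2_inner (S x) y"
    using x y Sx assms(3,4)
    by (simp add: id_lincomb_def l2_inner_vadd_left l2_inner_vscale_left l2_vscale Reals_cnj_iff)
  also have "\<dots> = l2_inner x (id_lincomb a b S y)"
    using x y Sy assms(2)
    by (simp add: selfadjoint_op_def id_lincomb_def l2_inner_vadd_right l2_inner_vscale_right l2_vscale)
  finally show "l2_inner (id_lincomb a b S x) y = l2_inner x (id_lincomb a b S y)" .
qed

lemma id_lincomb_id_lincomb:
  assumes "bounded_op S" "x \<in> l2"
  shows "id_lincomb a b S (id_lincomb c d S x) = (\<lambda>n. a * c * x n + (a * d + b * c) * S x n + b * d * S (S x) n)"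
  using bounded_op_vadd[OF assms(1) l2_vscale l2_vscale, OF assms(2) bounded_op_l2[OF assms]]
    bounded_op_vscale[OF assms(1)] assms bounded_op_l2[OF assms]
  by (simp add: id_lincomb_def vadd_def vscale_def algebra_simps)

lemma fund_sym_of_orth_proj:
  assumes "orth_proj P"
  shows "fund_sym (id_lincomb (-1) 2 P)"
proof -
  have P: "bounded_op P" "selfadjoint_op P" and idem: "\<And>x. x \<in> l2 \<Longrightarrow> P (P x) = P x"
    using assms unfolding orth_proj_def by blast+
  have "id_lincomb (-1) 2 P (id_lincomb (-1) 2 P x) = x" if "x \<in> l2" for x
    using that by (simp add: id_lincomb_id_lincomb P idem)
  then show ?thesis
    unfolding fund_sym_def
    using bounded_op_id_lincomb[OF P(1)] selfadjoint_op_id_lincomb[OF P] by simp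
qed

lemma orth_proj_of_fund_sym:
  assumes "fund_sym J"
  shows "orth_proj (id_lincomb (1/2) (1/2) J)"
proof -
  have J: "bounded_op J" "selfadjoint_op J" and invol: "\<And>x. x \<in> l2 \<Longrightarrow> J (J x) = x"
    using assms unfolding fund_sym_def by blast+
  have "id_lincomb (1/2) (1/2) J (id_lincomb (1/2) (1/2) J x) = id_lincomb (1/2) (1/2) J x"
    if "x \<in> l2" for x
    using that by (simp add: id_lincomb_id_lincomb J invol) (simp add: id_lincomb_def vadd_def vscale_def)
  then show ?thesis
    unfolding orth_proj_def
    using bounded_op_id_lincomb[OF J(1)] selfadjoint_op_id_lincomb[OF J] by simp
qed

lemma range_idempotent_op:
  assumes "bounded_op P" "\<And>x. x \<in> l2 \<Longrightarrow> P (P x) = P x"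
  shows "P ` l2 = {x \<in> l2. P x = x}"
  using assms by (force intro: bounded_op_l2)

lemma range_complement_idempotent_op:
  assumes "bounded_op P" "\<And>x. x \<in> l2 \<Longrightarrow> P (P x) = P x"
  shows "(\<lambda>x. vsub x (P x)) ` l2 = {x \<in> l2. P x = vzero}"
proof (intro equalityI subsetI)
  fix y assume "y \<in> (\<lambda>x. vsub x (P x)) ` l2"
  then obtain x where x: "x \<in> l2" and y: "y = vsub x (P x)" by blast
  have "y \<in> l2"
    using x assms(1) by (simp add: y l2_vsub bounded_op_l2)
  moreover have "P y = vzero"
    using x assms by (simp add: y bounded_op_vsub bounded_op_l2) (simp add: vsub_def vzero_def)
  ultimately show "y \<in> {x \<in> l2. P x = vzero}" by simp
next
  fix y assume "y \<in> {x \<in> l2. P x = vzero}"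
  then have "y \<in> l2" "y = vsub y (P y)" by (auto simp: vsub_def vzero_def)
  then show "y \<in> (\<lambda>x. vsub x (P x)) ` l2" by blast
qed

lemma involution_image_disjoint_iff:
  assumes R: "linear_manifold R" and J: "bounded_op J" "\<And>x. x \<in> l2 \<Longrightarrow> J (J x) = x"
  shows "J ` R \<inter> R = {vzero} \<longleftrightarrow>
    (\<forall>x\<in>R. J x = x \<longrightarrow> x = vzero) \<and> (\<forall>x\<in>R. J x = vscale (-1) x \<longrightarrow> x = vzero)"
proof -
  have RL: "R \<subseteq> l2" and R0: "vzero \<in> R"
    and Radd: "\<And>x y. x \<in> R \<Longrightarrow> y \<in> R \<Longrightarrow> vadd x y \<in> R"
    and Rscale: "\<And>c x. x \<in> R \<Longrightarrow> vscale c x \<in> R"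
    using R unfolding linear_manifold_def by blast+
  have J0: "J vzero = vzero"
    using J(1) by (rule bounded_op_vzero)
  show ?thesis
  proof
    assume "J ` R \<inter> R = {vzero}"
    then have zero: "J x = vzero" if "x \<in> R" "J x \<in> R" for x
      using that by blast
    have "x = vzero" if "x \<in> R" "J x = x" for x
      using zero[of x] that by simp
    moreover have "x = vzero" if x: "x \<in> R" and Jx: "J x = vscale (-1) x" for x
    proof -
      have "J (vscale (-1) x) = vscale (-1) (J x)"
        using J(1) x RL by (auto intro: bounded_op_vscale)
      then have "J (vscale (-1) x) = x"
        by (simp add: Jx vscale_def)
      then show ?thesis
        using zero[OF Rscale[OF x], of "-1"] x by simp
    qed
    ultimately show "(\<forall>x\<in>R. J x = x \<longrightarrow> x = vzero) \<and> (\<forall>x\<in>R. J x = vscale (-1) x \<longrightarrow> x = vzero)"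
      by blast
  next
    assume "(\<forall>x\<in>R. J x = x \<longrightarrow> x = vzero) \<and> (\<forall>x\<in>R. J x = vscale (-1) x \<longrightarrow> x = vzero)"
    then have fixed: "\<forall>x\<in>R. J x = x \<longrightarrow> x = vzero"
      and anti: "\<forall>x\<in>R. J x = vscale (-1) x \<longrightarrow> x = vzero" by simp_all
    have "x = vzero" if x: "x \<in> R" and Jx: "J x \<in> R" for x
    proof -
      have xL: "x \<in> l2" using x RL by blast
      have "J (vadd x (J x)) = vadd x (J x)"
        using J xL by (simp add: bounded_op_vadd bounded_op_l2) (simp add: vadd_def add.commute)
      then have "vadd x (J x) = vzero"
        using fixed Radd[OF x Jx] by blast
      then have "J x = vscale (-1) x"
        by (simp add: vadd_def vzero_def vscale_def fun_eq_iff eq_neg_iff_add_eq_0 add.commute)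
      then show ?thesis using anti x by blast
    qed
    then show "J ` R \<inter> R = {vzero}"
      using J0 R0 by force
  qed
qed

lemma complementary_ranges_disjoint_iff:
  assumes R: "linear_manifold R" and P: "orth_proj P" and J: "fund_sym J"
    and JP: "\<And>x. x \<in> l2 \<Longrightarrow> J x = id_lincomb (-1) 2 P x"
  shows "P ` l2 \<inter> R = {vzero} \<and> (\<lambda>x. vsub x (P x)) ` l2 \<inter> R = {vzero} \<longleftrightarrow>
    J ` R \<inter> R = {vzero}"
proof -
  have RL: "R \<subseteq> l2" and R0: "vzero \<in> R"
    using R unfolding linear_manifold_def by blast+
  have P': "bounded_op P" "\<And>x. x \<in> l2 \<Longrightarrow> P (P x) = P x"
    using P unfolding orth_proj_def by blast+
  have P0: "P vzero = vzero"
    using P'(1) by (rule bounded_op_vzero)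
  have ranP: "P ` l2 = {x \<in> l2. P x = x}"
    using P' by (rule range_idempotent_op)
  have ranQ: "(\<lambda>x. vsub x (P x)) ` l2 = {x \<in> l2. P x = vzero}"
    using P' by (rule range_complement_idempotent_op)
  have fixed: "J x = x \<longleftrightarrow> P x = x" if "x \<in> l2" for x
    using JP[OF that] by (auto simp: id_lincomb_def vadd_def vscale_def fun_eq_iff)
  have anti: "J x = vscale (-1) x \<longleftrightarrow> P x = vzero" if "x \<in> l2" for x
    using JP[OF that] by (auto simp: id_lincomb_def vadd_def vscale_def vzero_def fun_eq_iff)
  have "P ` l2 \<inter> R = {vzero} \<longleftrightarrow> (\<forall>x\<in>R. P x = x \<longrightarrow> x = vzero)"
    using RL R0 P0 l2_vzero by (auto simp: ranP)
  moreover have "(\<lambda>x. vsub x (P x)) ` l2 \<inter> R = {vzero} \<longleftrightarrow>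
      (\<forall>x\<in>R. P x = vzero \<longrightarrow> x = vzero)"
    using RL R0 P0 l2_vzero by (auto simp: ranQ)
  moreover have "(\<forall>x\<in>R. P x = x \<longrightarrow> x = vzero) \<longleftrightarrow> (\<forall>x\<in>R. J x = x \<longrightarrow> x = vzero)"
    using fixed RL by blast
  moreover have "(\<forall>x\<in>R. P x = vzero \<longrightarrow> x = vzero) \<longleftrightarrow>
      (\<forall>x\<in>R. J x = vscale (-1) x \<longrightarrow> x = vzero)"
    using anti RL by blast
  moreover have "bounded_op J" "\<And>x. x \<in> l2 \<Longrightarrow> J (J x) = x"
    using J unfolding fund_sym_def by blast+
  ultimately show ?thesis
    using involution_image_disjoint_iff[OF R] by simp
qed

theorem proposition3p1:
  assumes "linear_manifold R" and "\<not> l2_closed R"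
  shows "(\<exists>P. orth_proj P \<and> P ` l2 \<inter> R = {vzero} \<and> (\<lambda>x. vsub x (P x)) ` l2 \<inter> R = {vzero})
     \<longleftrightarrow> (\<exists>J. fund_sym J \<and> J ` R \<inter> R = {vzero})"
proof
  assume "\<exists>P. orth_proj P \<and> P ` l2 \<inter> R = {vzero} \<and> (\<lambda>x. vsub x (P x)) ` l2 \<inter> R = {vzero}"
  then obtain P where P: "orth_proj P"
    and "P ` l2 \<inter> R = {vzero} \<and> (\<lambda>x. vsub x (P x)) ` l2 \<inter> R = {vzero}" by blast
  then have "id_lincomb (-1) 2 P ` R \<inter> R = {vzero}"
    using complementary_ranges_disjoint_iff[OF assms(1) P fund_sym_of_orth_proj[OF P]] by simp
  then show "\<exists>J. fund_sym J \<and> J ` R \<inter> R = {vzero}"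
    using fund_sym_of_orth_proj[OF P] by blast
next
  assume "\<exists>J. fund_sym J \<and> J ` R \<inter> R = {vzero}"
  then obtain J where J: "fund_sym J" and "J ` R \<inter> R = {vzero}" by blast
  moreover have "J x = id_lincomb (-1) 2 (id_lincomb (1/2) (1/2) J) x" if "x \<in> l2" for x
    by (simp add: id_lincomb_def vadd_def vscale_def)
  ultimately have "id_lincomb (1/2) (1/2) J ` l2 \<inter> R = {vzero} \<and>
      (\<lambda>x. vsub x (id_lincomb (1/2) (1/2) J x)) ` l2 \<inter> R = {vzero}"
    using complementary_ranges_disjoint_iff[OF assms(1) orth_proj_of_fund_sym[OF J] J] by blast
  then show "\<exists>P. orth_proj P \<and> P ` l2 \<inter> R = {vzero} \<and> (\<lambda>x. vsub x (P x)) ` l2 \<inter> R = {vzero}"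
    using orth_proj_of_fund_sym[OF J] by blast
qed

end
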